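(* Let $\delta=x^{\mathbf d}f(\theta)$ be a homogeneous differential operator of degree $\mathbf d$ with $\mathbf d\neq\mathbf 0$, $-\mathbf d\in S$, $\mathbf d=q\mathbf e$ ($q\in\mathbb Z_{\ge1}$, $\mathbf e$ primitive). Suppose there is a subset $\mathcal B\subseteq\mathbb N^n$ compatible with $\mathbf d$ such that (1) $\operatorname{val}(\mathbf a)>-\infty$ for all $\mathbf a\in W_{\mathcal B}$; (2) for all $\mathbf a\in V'_{\mathrm{mon}}(f)\cap W_{\mathcal B}$ and all $i=0,\dots,q-1$, $\mathbf a-i\mathbf e\in V_{\mathrm{mon}}(f)$; (3) for all $\mathbf a,\mathbf b\in V'_{\mathrm{mon}}(f)\cap W_{\mathcal B}$, $\mathbf a-\mathbf b\notin S-\mathbf e$. Then $\delta$ fixes the ideal $I=(x^{\mathbf a}\mid \mathbf a\in V'_{\mathrm{mon}}(f)\cap W_{\mathcal B})$, and $\operatorname{Exp} I=\{\mathbf b\in W_{\mathcal B}:\operatorname{pval}(\mathbf b)\ge 0\}$.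
   Context: Standing notation. Fix $d\ge 1$. Let $\sigma\subseteq\mathbb R^d$ be a full-dimensional, strongly convex rational polyhedral cone, so $\sigma^\vee$ is full-dimensional and strongly convex. $S=\sigma^\vee\cap\mathbb Z^d$, $R=\mathbb C[S]$ with monomial basis $x^{\mathbf a}$, $\mathbf a\in S$. $h_1,\dots,h_n$ are the primitive support functions of the facets of $\sigma^\vee$, so $S=\{\mathbf a\in\mathbb Z^d:h_i(\mathbf a)\ge0\ \forall i\}$. $(g,m)!=\prod_{j=0}^m(g-j)$ for $m\ge0$, $=1$ for $m<0$; $H_{\mathbf d}=\prod_i(h_i,h_i(-\mathbf d)-1)!$. For $f$ divisible by $H_{\mathbf d}$, $\delta=x^{\mathbf d}f(\theta)$ acts by $\delta(x^{\mathbf a})=f(\mathbf a)x^{\mathbf a+\mathbf d}$. $\operatorname{Exp} I=\{\mathbf a\in S:x^{\mathbf a}\in I\}$; $I$ is $\delta$-fixed if $\delta(I)=I$. $V_{\mathrm{mon}}(f)=\{\mathbf a\in\mathbb Z^d:f(\mathbf a)=0\}$; $S-\mathbf e=\{\mathbf s-\mathbf e:\mathbf s\in S\}$. For $\mathbf a\in\mathbb Z^d$, $\operatorname{val}(\mathbf a)=\inf\{t\in\mathbb R:\mathbf a+t\mathbf d\in V_{\mathrm{mon}}(f)\}\in\mathbb R\cup\{\pm\infty\}$ ($\inf\emptyset=+\infty$). When $\operatorname{val}(\mathbf a)$ is finite, $\operatorname{pval}(\mathbf a)=\max\{t\in[\operatorname{val}(\mathbf a),\operatorname{val}(\mathbf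 a)+1):\mathbf a+t\mathbf d\in V_{\mathrm{mon}}(f)\}$ and $\operatorname{vpt}(\mathbf a)=\mathbf a+\operatorname{pval}(\mathbf a)\mathbf d$. $V'_{\mathrm{mon}}(f)=\{\operatorname{vpt}(\mathbf a):\mathbf a\in\mathbb Z^d,\ \operatorname{val}(\mathbf a)\text{ finite}\}$. A tuple $\beta\in\mathbb N^n$ is compatible with $\mathbf d$ if for every $i$, $\beta_i=0$ or $h_i(\mathbf d)=0$; $\mathcal B\subseteq\mathbb N^n$ is compatible with $\mathbf d$ if each element is. $W_\beta=\{\mathbf a\in S: h_i(\mathbf a)\ge\beta_i\ \forall i\}$, $W_{\mathcal B}=\bigcup_{\beta\in\mathcal B}W_\beta$. *)

theory Defs
  imports "HOL-Analysis.Analysis" "HOL-Library.Poly_Mapping"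
begin

(* h_i is given by its primitive integer coefficient vector; h_i(a) = <h_i, a> *)
definition lf :: "int^'d \<Rightarrow> int^'d \<Rightarrow> int" where
  "lf h a = (\<Sum>j\<in>UNIV. h$j * a$j)"

definition lfR :: "int^'d \<Rightarrow> real^'d \<Rightarrow> real" where
  "lfR h x = (\<Sum>j\<in>UNIV. real_of_int (h$j) * x$j)"

definition lfC :: "int^'d \<Rightarrow> complex^'d \<Rightarrow> complex" where
  "lfC h z = (\<Sum>j\<in>UNIV. of_int (h$j) * z$j)"

definition rv :: "int^'d \<Rightarrow> real^'d" where
  "rv a = (\<chi> j. real_of_int (a$j))"

definition cv :: "int^'d \<Rightarrow> complex^'d" where
  "cv a = (\<chi> j. of_int (a$j))"

definition primitive_vec :: "int^'d \<Rightarrow> bool" where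
  "primitive_vec v \<longleftrightarrow> (\<forall>k::int. (\<forall>j. k dvd v$j) \<longrightarrow> is_unit k)"

definition dual_cone :: "nat \<Rightarrow> (nat \<Rightarrow> int^'d) \<Rightarrow> (real^'d) set" where
  "dual_cone n h = {x. \<forall>i<n. lfR (h i) x \<ge> 0}"

(* h_1..h_n are the primitive support functions of the facets of a full-dimensional,
   strongly convex (rational polyhedral) cone sigma^vee *)
definition cone_data :: "nat \<Rightarrow> (nat \<Rightarrow> int^'d) \<Rightarrow> bool" where
  "cone_data n h \<longleftrightarrow>
     interior (dual_cone n h) \<noteq> {} \<and>
     (\<forall>x\<in>dual_cone n h. -x \<in> dual_cone n h \<longrightarrow> x = 0) \<and>
     inj_on h {..<n} \<and>
     (\<forall>i<n. primitive_vec (h i)) \<and>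
     (\<forall>i<n. {x\<in>dual_cone n h. lfR (h i) x = 0} facet_of dual_cone n h) \<and>
     (\<forall>F. F facet_of dual_cone n h \<longrightarrow> (\<exists>i<n. F = {x\<in>dual_cone n h. lfR (h i) x = 0}))"

definition semigp :: "nat \<Rightarrow> (nat \<Rightarrow> int^'d) \<Rightarrow> (int^'d) set" where
  "semigp n h = {a. \<forall>i<n. lf (h i) a \<ge> 0}"

definition ringR :: "nat \<Rightarrow> (nat \<Rightarrow> int^'d) \<Rightarrow> ((int^'d) \<Rightarrow>\<^sub>0 complex) set" where
  "ringR n h = {p. Poly_Mapping.keys p \<subseteq> semigp n h}"

definition xmon :: "int^'d \<Rightarrow> (int^'d) \<Rightarrow>\<^sub>0 complex" where
  "xmon a = Poly_Mapping.single a 1"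

definition mon_ideal :: "nat \<Rightarrow> (nat \<Rightarrow> int^'d) \<Rightarrow> (int^'d) set \<Rightarrow> ((int^'d) \<Rightarrow>\<^sub>0 complex) set" where
  "mon_ideal n h G = {(\<Sum>a\<in>F. r a * xmon a) | F r.
      finite F \<and> F \<subseteq> G \<and> (\<forall>a\<in>F. r a \<in> ringR n h)}"

definition Exp :: "nat \<Rightarrow> (nat \<Rightarrow> int^'d) \<Rightarrow> ((int^'d) \<Rightarrow>\<^sub>0 complex) set \<Rightarrow> (int^'d) set" where
  "Exp n h I = {a \<in> semigp n h. xmon a \<in> I}"

definition evalp :: "(('d::finite \<Rightarrow> nat) \<Rightarrow>\<^sub>0 complex) \<Rightarrow> complex^'d \<Rightarrow> complex" where
  "evalp f z = (\<Sum>\<alpha>\<in>Poly_Mapping.keys f. Poly_Mapping.lookup f \<alpha> * (\<Prod>j\<in>UNIV. (z$j) ^ (\<alpha> j)))"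

(* (g,m)! = prod_{j=0}^m (g - j) for m \<ge> 0, and 1 for m < 0 *)
definition ffact :: "complex \<Rightarrow> int \<Rightarrow> complex" where
  "ffact g m = (\<Prod>j\<in>{0..m}. g - of_int j)"

definition Hd :: "nat \<Rightarrow> (nat \<Rightarrow> int^'d) \<Rightarrow> int^'d \<Rightarrow> complex^'d \<Rightarrow> complex" where
  "Hd n h dd z = (\<Prod>i<n. ffact (lfC (h i) z) (lf (h i) (-dd) - 1))"

(* divisibility in the polynomial ring C[theta] (C infinite, so polynomial functions suffice) *)
definition divisible_by_Hd :: "nat \<Rightarrow> (nat \<Rightarrow> int^'d::finite) \<Rightarrow> int^'d \<Rightarrow> (('d \<Rightarrow> nat) \<Rightarrow>\<^sub>0 complex) \<Rightarrow> bool" where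
  "divisible_by_Hd n h dd f \<longleftrightarrow> (\<exists>g. \<forall>z. evalp f z = Hd n h dd z * evalp g z)"

(* delta = x^d f(theta): x^a \<mapsto> f(a) x^(a+d), extended linearly *)
definition delta :: "int^'d \<Rightarrow> (('d::finite \<Rightarrow> nat) \<Rightarrow>\<^sub>0 complex) \<Rightarrow> ((int^'d) \<Rightarrow>\<^sub>0 complex) \<Rightarrow> ((int^'d) \<Rightarrow>\<^sub>0 complex)" where
  "delta dd f p = (\<Sum>a\<in>Poly_Mapping.keys p. Poly_Mapping.single (a + dd) (Poly_Mapping.lookup p a * evalp f (cv a)))"

definition Vmon :: "(('d::finite \<Rightarrow> nat) \<Rightarrow>\<^sub>0 complex) \<Rightarrow> (int^'d) set" where
  "Vmon f = {a. evalp f (cv a) = 0}"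

definition online :: "int^'d \<Rightarrow> (('d::finite \<Rightarrow> nat) \<Rightarrow>\<^sub>0 complex) \<Rightarrow> int^'d \<Rightarrow> real \<Rightarrow> bool" where
  "online dd f a t \<longleftrightarrow> (\<exists>b\<in>Vmon f. rv b = rv a + t *\<^sub>R rv dd)"

definition val :: "int^'d \<Rightarrow> (('d::finite \<Rightarrow> nat) \<Rightarrow>\<^sub>0 complex) \<Rightarrow> int^'d \<Rightarrow> ereal" where
  "val dd f a = Inf {ereal t | t. online dd f a t}"

(* only meaningful when val is finite *)
definition pval :: "int^'d \<Rightarrow> (('d::finite \<Rightarrow> nat) \<Rightarrow>\<^sub>0 complex) \<Rightarrow> int^'d \<Rightarrow> real" where
  "pval dd f a = Max {t. real_of_ereal (val dd f a) \<le> t \<and> t < real_of_ereal (val dd f a) + 1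
                         \<and> online dd f a t}"

definition vpt :: "int^'d \<Rightarrow> (('d::finite \<Rightarrow> nat) \<Rightarrow>\<^sub>0 complex) \<Rightarrow> int^'d \<Rightarrow> real^'d" where
  "vpt dd f a = rv a + pval dd f a *\<^sub>R rv dd"

definition Vmon' :: "int^'d \<Rightarrow> (('d::finite \<Rightarrow> nat) \<Rightarrow>\<^sub>0 complex) \<Rightarrow> (int^'d) set" where
  "Vmon' dd f = {b. \<exists>a. val dd f a \<noteq> \<infinity> \<and> val dd f a \<noteq> -\<infinity> \<and> rv b = vpt dd f a}"

definition compatible :: "nat \<Rightarrow> (nat \<Rightarrow> int^'d) \<Rightarrow> int^'d \<Rightarrow> (nat \<Rightarrow> nat) set \<Rightarrow> bool" where
  "compatible n h dd B \<longleftrightarrow> (\<forall>\<beta>\<in>B. \<forall>i<n. \<beta> i = 0 \<or> lf (h i) dd = 0)"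

definition Wbeta :: "nat \<Rightarrow> (nat \<Rightarrow> int^'d) \<Rightarrow> (nat \<Rightarrow> nat) \<Rightarrow> (int^'d) set" where
  "Wbeta n h \<beta> = {a \<in> semigp n h. \<forall>i<n. lf (h i) a \<ge> int (\<beta> i)}"

definition WB :: "nat \<Rightarrow> (nat \<Rightarrow> int^'d) \<Rightarrow> (nat \<Rightarrow> nat) set \<Rightarrow> (int^'d) set" where
  "WB n h B = (\<Union>\<beta>\<in>B. Wbeta n h \<beta>)"

end

theory Submission
  imports Defs
begin

text \<open>
  Fix a lattice point \<open>a\<close> and look at the zeros of \<open>f\<close> on the line \<open>a + \<int>e\<close>.
  Since \<open>H\<^sub>d\<close> divides \<open>f\<close>, for every facet with \<open>h\<^sub>i(-e) > 0\<close> the \<open>q\<close> consecutive points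
  of the line where \<open>0 \<le> h\<^sub>i < h\<^sub>i(-d)\<close> are zeros.  Hence (when \<open>val a > -\<infinity>\<close>)
  \<open>val a = m\<^sub>0/q\<close> and \<open>pval a = m\<^sub>p/q\<close> with integers \<open>m\<^sub>0 \<le> m\<^sub>p < m\<^sub>0 + q\<close>, and the point
  \<open>vpt a = a + m\<^sub>p e\<close> lies in \<open>S\<close>, indeed in \<open>W\<^sub>\<B>\<close> when \<open>a\<close> does.

  The ideal \<open>I\<close> is spanned by the monomials with exponent in \<open>G + S\<close>, \<open>G = V'\<^sub>m\<^sub>o\<^sub>n(f) \<inter> W\<^sub>\<B>\<close>.
  A point \<open>b \<in> W\<^sub>\<B>\<close> with \<open>m\<^sub>p \<ge> 0\<close> is \<open>vpt b + m\<^sub>p(-e) \<in> G + S\<close>; conversely, for \<open>b \<in> G + S\<close>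
  condition (3) excludes \<open>m\<^sub>p < 0\<close>.  On \<open>G + S\<close> the operator is an isomorphism of the
  monomial span: if \<open>f(a) \<noteq> 0\<close> then condition (2) forces \<open>m\<^sub>p \<ge> q\<close>, so \<open>a + d \<in> G + S\<close>; and
  \<open>f(b - d) \<noteq> 0\<close> for \<open>b \<in> G + S\<close>, since otherwise \<open>m\<^sub>0 \<le> -q\<close> and \<open>m\<^sub>p < 0\<close>.
\<close>

lemma lf_add: "lf h (a + b) = lf h a + lf h b"
  by (simp add: lf_def sum.distrib algebra_simps)

lemma lf_minus: "lf h (- a) = - lf h a"
  by (simp add: lf_def sum_negf)

lemma lf_scalar_mult: "lf h (m *s v) = m * lf h v"
  by (simp add: lf_def sum_distrib_left algebra_simps)

lemma lfR_rv: "lfR h (rv a) = real_of_int (lf h a)"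
  by (simp add: lfR_def lf_def rv_def)

lemma lfC_cv: "lfC h (cv a) = of_int (lf h a)"
  by (simp add: lfC_def lf_def cv_def)

lemma semigp_add: "a \<in> semigp n h \<Longrightarrow> b \<in> semigp n h \<Longrightarrow> a + b \<in> semigp n h"
  by (simp add: semigp_def lf_add)

lemma WB_subset_semigp: "WB n h B \<subseteq> semigp n h"
  by (auto simp: WB_def Wbeta_def)

lemma WB_add_semigp:
  assumes "a \<in> WB n h B" "s \<in> semigp n h"
  shows "a + s \<in> WB n h B"
proof -
  obtain \<beta> where "\<beta> \<in> B" "a \<in> Wbeta n h \<beta>" using assms(1) by (auto simp: WB_def)
  moreover from this(2) have "a + s \<in> Wbeta n h \<beta>"
    using assms(2) unfolding Wbeta_def semigp_def by (auto simp: lf_add add_increasing2)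
  ultimately show ?thesis by (auto simp: WB_def)
qed

lemma int_Inf_mem:
  fixes X :: "int set"
  assumes "X \<noteq> {}" "bdd_below X"
  shows "Inf X \<in> X"
proof -
  obtain x L where x: "x \<in> X" and L: "\<forall>y\<in>X. L \<le> y"
    using assms by (auto simp: bdd_below_def)
  define m where "m = Min (X \<inter> {L..x})"
  have fin: "finite (X \<inter> {L..x})" and ne: "X \<inter> {L..x} \<noteq> {}" using x L by auto
  have "m \<in> X" using Min_in[OF fin ne] by (simp add: m_def)
  moreover have "m \<le> y" if "y \<in> X" for y
  proof (cases "y \<le> x")
    case True then show ?thesis using that L fin by (auto simp: m_def intro!: Min_le)
  next
    case False then show ?thesis using x L fin by (force simp: m_def intro: order.trans[OF Min_le])
  qed
  ultimately show ?thesis using cInf_eq_minimum by metis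
qed

lemma primitive_vec_integral_multiple:
  fixes u :: real and e :: "int^'d"
  assumes prim: "primitive_vec e" and nz: "e \<noteq> 0"
    and integral: "\<forall>j. \<exists>z::int. u * real_of_int (e$j) = real_of_int z"
  shows "\<exists>m::int. u = real_of_int m"
proof -
  obtain j0 where j0: "e$j0 \<noteq> 0" using nz by (metis vec_eq_iff zero_index)
  obtain z0 where "u * real_of_int (e$j0) = real_of_int z0" using integral by blast
  then have "u = real_of_int z0 / real_of_int (e$j0)" using j0 by (simp add: field_simps)
  then have "u \<in> \<rat>" by simp
  then obtain x y where y: "y > 0" and cp: "coprime x y" and u: "u = of_int x / of_int y"
    using Rats_cases' by blast
  have "y dvd e$j" for j
  proof -
    obtain z where "u * real_of_int (e$j) = real_of_int z" using integral by blast
    then have "real_of_int (x * e$j) = real_of_int (y * z)"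
      using y by (simp add: u field_simps)
    then have "y dvd x * e$j" by (metis dvd_triv_left of_int_eq_iff)
    then show "y dvd e$j" using cp by (meson coprime_commute coprime_dvd_mult_right_iff)
  qed
  then have "is_unit y" using prim unfolding primitive_vec_def by blast
  then show ?thesis using y u by auto
qed

lemma sum_single_lookup:
  "(\<Sum>b\<in>Poly_Mapping.keys p. Poly_Mapping.single b (Poly_Mapping.lookup p b)) = p"
proof (rule poly_mapping_eqI)
  fix x
  have "(\<Sum>b\<in>Poly_Mapping.keys p. Poly_Mapping.lookup (Poly_Mapping.single b (Poly_Mapping.lookup p b)) x)
      = (\<Sum>b\<in>Poly_Mapping.keys p. if b = x then Poly_Mapping.lookup p b else 0)"
    by (rule sum.cong) (auto simp: lookup_single when_def)
  then show "Poly_Mapping.lookup (\<Sum>b\<in>Poly_Mapping.keys p. Poly_Mapping.single b (Poly_Mapping.lookup p b)) x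
      = Poly_Mapping.lookup p x"
    by (simp add: lookup_sum in_keys_iff)
qed

definition mon_upset :: "nat \<Rightarrow> (nat \<Rightarrow> int^'d) \<Rightarrow> (int^'d) set \<Rightarrow> (int^'d) set" where
  "mon_upset n h G = {g + s | g s. g \<in> G \<and> s \<in> semigp n h}"

lemma mon_upset_add_semigp:
  assumes "b \<in> mon_upset n h G" "s \<in> semigp n h"
  shows "b + s \<in> mon_upset n h G"
proof -
  obtain g t where gt: "b = g + t" "g \<in> G" "t \<in> semigp n h"
    using assms(1) by (auto simp: mon_upset_def)
  have "b + s = g + (t + s)" by (simp add: gt(1) add.assoc)
  moreover have "t + s \<in> semigp n h" using gt(3) assms(2) by (rule semigp_add)
  ultimately show ?thesis unfolding mon_upset_def using gt(2) by blast
qed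

lemma keys_mult_xmon_subset:
  assumes "r \<in> ringR n h" "g \<in> G"
  shows "Poly_Mapping.keys (r * xmon g) \<subseteq> mon_upset n h G"
proof -
  have "Poly_Mapping.keys (r * xmon g) \<subseteq> {x + g |x. x \<in> Poly_Mapping.keys r}"
    using keys_mult[of r "xmon g"] by (auto simp: xmon_def)
  also have "\<dots> \<subseteq> mon_upset n h G"
  proof
    fix y assume "y \<in> {x + g |x. x \<in> Poly_Mapping.keys r}"
    then obtain x where "y = g + x" "x \<in> semigp n h"
      using assms(1) by (auto simp: ringR_def add.commute)
    then show "y \<in> mon_upset n h G" unfolding mon_upset_def using assms(2) by blast
  qed
  finally show ?thesis .
qed

lemma mon_ideal_eq: "mon_ideal n h G = {p. Poly_Mapping.keys p \<subseteq> mon_upset n h G}"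
proof (intro set_eqI iffI)
  fix p assume "p \<in> mon_ideal n h G"
  then obtain F r where p: "p = (\<Sum>a\<in>F. r a * xmon a)" "finite F" "F \<subseteq> G" "\<forall>a\<in>F. r a \<in> ringR n h"
    unfolding mon_ideal_def by blast
  have "Poly_Mapping.keys p \<subseteq> (\<Union>a\<in>F. Poly_Mapping.keys (r a * xmon a))"
    unfolding p(1) by (rule keys_sum)
  also have "\<dots> \<subseteq> mon_upset n h G" using p(3,4) keys_mult_xmon_subset by blast
  finally show "p \<in> {p. Poly_Mapping.keys p \<subseteq> mon_upset n h G}" by simp
next
  fix p :: "_ \<Rightarrow>\<^sub>0 complex"
  assume "p \<in> {p. Poly_Mapping.keys p \<subseteq> mon_upset n h G}"
  then have pk: "Poly_Mapping.keys p \<subseteq> mon_upset n h G" by simp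
  have "\<forall>b\<in>mon_upset n h G. \<exists>g. g \<in> G \<and> b - g \<in> semigp n h"
    unfolding mon_upset_def by force
  then obtain gen where gen: "\<forall>b\<in>mon_upset n h G. gen b \<in> G \<and> b - gen b \<in> semigp n h"
    by metis
  define K where "K = Poly_Mapping.keys p"
  define r where
    "r a = (\<Sum>b\<in>{b\<in>K. gen b = a}. Poly_Mapping.single (b - a) (Poly_Mapping.lookup p b))" for a
  have "(\<Sum>a\<in>gen ` K. r a * xmon a)
      = (\<Sum>a\<in>gen ` K. \<Sum>b\<in>{b\<in>K. gen b = a}. Poly_Mapping.single b (Poly_Mapping.lookup p b))"
    unfolding r_def sum_distrib_right by (intro sum.cong refl) (simp add: xmon_def mult_single)
  also have "\<dots> = (\<Sum>b\<in>K. Poly_Mapping.single b (Poly_Mapping.lookup p b))"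
    by (rule sum.group) (auto simp: K_def)
  also have "\<dots> = p" unfolding K_def by (rule sum_single_lookup)
  finally have p: "p = (\<Sum>a\<in>gen ` K. r a * xmon a)" by (rule sym)
  have "r a \<in> ringR n h" for a
  proof -
    have "Poly_Mapping.keys (r a)
        \<subseteq> (\<Union>b\<in>{b\<in>K. gen b = a}. Poly_Mapping.keys (Poly_Mapping.single (b - a) (Poly_Mapping.lookup p b)))"
      unfolding r_def by (rule keys_sum)
    also have "\<dots> \<subseteq> semigp n h" using gen pk unfolding K_def by auto
    finally show ?thesis by (simp add: ringR_def)
  qed
  moreover have "gen ` K \<subseteq> G" using gen pk unfolding K_def by auto
  moreover have "finite (gen ` K)" by (simp add: K_def)
  ultimately show "p \<in> mon_ideal n h G" unfolding mon_ideal_def using p by blast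
qed

lemma Exp_mon_ideal:
  assumes "G \<subseteq> semigp n h"
  shows "Exp n h (mon_ideal n h G) = mon_upset n h G"
proof -
  have "b \<in> semigp n h" if b: "b \<in> mon_upset n h G" for b
  proof -
    obtain g s where "b = g + s" "g \<in> semigp n h" "s \<in> semigp n h"
      using b assms by (auto simp: mon_upset_def)
    then show ?thesis by (simp add: semigp_add)
  qed
  moreover have "xmon b \<in> mon_ideal n h G \<longleftrightarrow> b \<in> mon_upset n h G" for b
    by (simp add: mon_ideal_eq xmon_def)
  ultimately show ?thesis unfolding Exp_def by blast
qed

lemma lookup_delta:
  "Poly_Mapping.lookup (delta dd f p) x = Poly_Mapping.lookup p (x - dd) * evalp f (cv (x - dd))"
proof -
  have "Poly_Mapping.lookup (delta dd f p) x
      = (\<Sum>a\<in>Poly_Mapping.keys p. if a = x - dd then Poly_Mapping.lookup p a * evalp f (cv a) else 0)"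
    unfolding delta_def lookup_sum by (rule sum.cong) (auto simp: lookup_single when_def)
  then show ?thesis by (simp add: in_keys_iff)
qed

lemma delta_image_keys_eq:
  assumes into: "\<And>a. a \<in> E \<Longrightarrow> evalp f (cv a) \<noteq> 0 \<Longrightarrow> a + dd \<in> E"
    and down: "\<And>x. x + dd \<in> E \<Longrightarrow> x \<in> E"
    and nonzero: "\<And>b. b \<in> E \<Longrightarrow> evalp f (cv (b - dd)) \<noteq> 0"
  shows "delta dd f ` {p. Poly_Mapping.keys p \<subseteq> E} = {p. Poly_Mapping.keys p \<subseteq> E}"
proof (intro equalityI subsetI)
  fix p' assume "p' \<in> delta dd f ` {p. Poly_Mapping.keys p \<subseteq> E}"
  then obtain p where p: "Poly_Mapping.keys p \<subseteq> E" and p': "p' = delta dd f p" by blast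
  have "x \<in> E" if "x \<in> Poly_Mapping.keys p'" for x
  proof -
    from that have "x - dd \<in> Poly_Mapping.keys p" and nz: "evalp f (cv (x - dd)) \<noteq> 0"
      by (simp_all add: p' in_keys_iff lookup_delta)
    with p have "x - dd \<in> E" by blast
    from into[OF this nz] show ?thesis by simp
  qed
  then show "p' \<in> {p. Poly_Mapping.keys p \<subseteq> E}" by blast
next
  fix p :: "_ \<Rightarrow>\<^sub>0 complex"
  assume "p \<in> {p. Poly_Mapping.keys p \<subseteq> E}"
  then have pk: "Poly_Mapping.keys p \<subseteq> E" by simp
  define g where "g x = Poly_Mapping.lookup p (x + dd) / evalp f (cv x)" for x
  have g_nz: "x + dd \<in> Poly_Mapping.keys p" if "g x \<noteq> 0" for x
    using that by (auto simp: g_def in_keys_iff)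
  have "{x. g x \<noteq> 0} \<subseteq> (\<lambda>b. b - dd) ` Poly_Mapping.keys p"
  proof
    fix x assume "x \<in> {x. g x \<noteq> 0}"
    then have "x + dd \<in> Poly_Mapping.keys p" using g_nz by blast
    then show "x \<in> (\<lambda>b. b - dd) ` Poly_Mapping.keys p" by (rule rev_image_eqI) simp
  qed
  then have "finite {x. g x \<noteq> 0}" by (rule finite_subset) simp
  then have lookup_p': "Poly_Mapping.lookup (Abs_poly_mapping g) = g" by simp
  have "Poly_Mapping.keys (Abs_poly_mapping g) \<subseteq> E"
  proof
    fix x assume "x \<in> Poly_Mapping.keys (Abs_poly_mapping g)"
    then have "x + dd \<in> Poly_Mapping.keys p" by (intro g_nz) (simp add: in_keys_iff lookup_p')
    with pk have "x + dd \<in> E" by blast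
    then show "x \<in> E" by (rule down)
  qed
  moreover have "delta dd f (Abs_poly_mapping g) = p"
  proof (rule poly_mapping_eqI)
    fix x
    show "Poly_Mapping.lookup (delta dd f (Abs_poly_mapping g)) x = Poly_Mapping.lookup p x"
    proof (cases "x \<in> E")
      case True
      then show ?thesis using nonzero[OF True] by (simp add: lookup_delta lookup_p' g_def)
    next
      case False
      then have "Poly_Mapping.lookup p x = 0" using pk by (auto simp: in_keys_iff)
      then show ?thesis by (simp add: lookup_delta lookup_p' g_def)
    qed
  qed
  ultimately show "p \<in> delta dd f ` {p. Poly_Mapping.keys p \<subseteq> E}" by blast
qed

locale homogeneous_operator =
  fixes n :: nat and h :: "nat \<Rightarrow> int^'d::finite"
    and dd e :: "int^'d" and q :: int
    and f :: "('d \<Rightarrow> nat) \<Rightarrow>\<^sub>0 complex"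
  assumes cone: "cone_data n h"
    and d_nz: "dd \<noteq> 0"
    and md_S: "-dd \<in> semigp n h"
    and q_pos: "q \<ge> 1" and e_prim: "primitive_vec e" and d_eq: "dd = (\<chi> j. q * e$j)"
    and f_div: "divisible_by_Hd n h dd f"
begin

lemma dd_eq_smult: "dd = q *s e"
  using d_eq by (simp add: vector_scalar_mult_def)

lemma e_nz: "e \<noteq> 0"
  using d_nz dd_eq_smult by auto

definition slope :: "nat \<Rightarrow> int" where
  "slope i = lf (h i) (-e)"

lemma lf_neg_dd: "lf (h i) (-dd) = q * slope i"
  by (simp add: dd_eq_smult slope_def lf_minus lf_scalar_mult)

lemma slope_nonneg: "i < n \<Longrightarrow> 0 \<le> slope i"
  using md_S q_pos by (auto simp: semigp_def lf_neg_dd zero_le_mult_iff)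

lemma lf_on_line: "lf (h i) (a + m *s e) = lf (h i) a - m * slope i"
  by (simp add: lf_add lf_scalar_mult slope_def lf_minus)

lemma smult_neg_e_in_semigp:
  assumes "0 \<le> m"
  shows "m *s (-e) \<in> semigp n h"
proof -
  have "lf (h i) (m *s (-e)) = m * slope i" for i unfolding slope_def by (rule lf_scalar_mult)
  then show ?thesis using assms slope_nonneg by (simp add: semigp_def)
qed

text \<open>Strong convexity of the cone: \<open>e\<close> and \<open>-e\<close> cannot both lie in it.\<close>

lemma ex_slope_pos: "\<exists>i<n. 0 < slope i"
proof (rule ccontr)
  assume "\<not> ?thesis"
  then have "\<forall>i<n. slope i = 0" using slope_nonneg by force
  moreover have "- rv e = rv (-e)" by (simp add: rv_def vec_eq_iff)
  ultimately have "rv e \<in> dual_cone n h" "- rv e \<in> dual_cone n h"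
    by (auto simp: dual_cone_def lfR_rv slope_def lf_minus)
  then have "rv e = 0" using cone unfolding cone_data_def by blast
  then show False using e_nz by (simp add: rv_def vec_eq_iff)
qed

lemma Vmon_if_Hd_root:
  assumes "i < n" "0 \<le> lf (h i) x" "lf (h i) x < lf (h i) (-dd)"
  shows "x \<in> Vmon f"
proof -
  have "ffact (lfC (h i) (cv x)) (lf (h i) (-dd) - 1) = 0"
    unfolding ffact_def lfC_cv
    by (rule prod_zero) (use assms in \<open>auto intro!: bexI[of _ "lf (h i) x"]\<close>)
  then have "Hd n h dd (cv x) = 0" unfolding Hd_def
    by (intro prod_zero) (use assms in auto)
  then show ?thesis using f_div unfolding divisible_by_Hd_def Vmon_def by auto
qed

definition line_zeros :: "int^'d \<Rightarrow> int set" where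
  "line_zeros a = {m. a + m *s e \<in> Vmon f}"

lemma consecutive_line_zeros:
  assumes i: "i < n" "0 < slope i"
    and m: "lf (h i) a div slope i - q < m" "m \<le> lf (h i) a div slope i"
  shows "m \<in> line_zeros a"
proof -
  define k where "k = lf (h i) a div slope i"
  define r where "r = lf (h i) a mod slope i"
  have a: "lf (h i) a = k * slope i + r" by (simp add: k_def r_def)
  have r: "0 \<le> r" "r < slope i" using i by (simp_all add: r_def)
  have "m * slope i \<le> k * slope i" "(k - q + 1) * slope i \<le> m * slope i"
    using m i by (simp_all add: k_def mult_right_mono)
  then have "0 \<le> lf (h i) (a + m *s e)" "lf (h i) (a + m *s e) < lf (h i) (-dd)"
    unfolding lf_on_line lf_neg_dd a using r by (simp_all only: algebra_simps)
  then show ?thesis unfolding line_zeros_def using Vmon_if_Hd_root i by blast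
qed

lemma line_zeros_nonempty: "line_zeros a \<noteq> {}"
proof -
  obtain i where "i < n" "0 < slope i" using ex_slope_pos by blast
  then have "lf (h i) a div slope i \<in> line_zeros a" using q_pos by (intro consecutive_line_zeros) auto
  then show ?thesis by blast
qed

lemma online_iff_line_zeros: "online dd f a t \<longleftrightarrow> (\<exists>m\<in>line_zeros a. t = of_int m / of_int q)"
proof
  assume "online dd f a t"
  then obtain b where b: "b \<in> Vmon f" "rv b = rv a + t *\<^sub>R rv dd" unfolding online_def by blast
  then have comp: "real_of_int (b$j) = real_of_int (a$j) + (t * of_int q) * of_int (e$j)" for j
    by (auto simp: vec_eq_iff rv_def dd_eq_smult)
  have "\<forall>j. \<exists>z::int. (t * of_int q) * real_of_int (e$j) = real_of_int z"
  proof
    fix j show "\<exists>z::int. (t * of_int q) * real_of_int (e$j) = real_of_int z"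
      using comp[of j] by (intro exI[of _ "b$j - a$j"]) simp
  qed
  then obtain m where m: "t * of_int q = of_int m"
    using primitive_vec_integral_multiple[OF e_prim e_nz] by blast
  have "b = a + m *s e"
    using comp m by (simp add: vec_eq_iff) (metis of_int_add of_int_eq_iff of_int_mult)
  then have "m \<in> line_zeros a" using b by (simp add: line_zeros_def)
  moreover have "t = of_int m / of_int q" using m q_pos by (simp add: field_simps)
  ultimately show "\<exists>m\<in>line_zeros a. t = of_int m / of_int q" by blast
next
  assume "\<exists>m\<in>line_zeros a. t = of_int m / of_int q"
  then obtain m where m: "m \<in> line_zeros a" "t = of_int m / of_int q" by blast
  have "rv (a + m *s e) = rv a + t *\<^sub>R rv dd"
    using q_pos by (simp add: m(2) vec_eq_iff rv_def dd_eq_smult)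
  then show "online dd f a t" using m unfolding online_def line_zeros_def by blast
qed

lemma val_eq_Inf: "val dd f a = Inf ((\<lambda>m. ereal (of_int m / of_int q)) ` line_zeros a)"
  unfolding val_def online_iff_line_zeros by (rule arg_cong[where f=Inf]) auto

text \<open>\<open>val a = val_int a / q\<close> and \<open>pval a = pval_int a / q\<close> (when \<open>val a > -\<infinity>\<close>).\<close>

definition val_int :: "int^'d \<Rightarrow> int" where
  "val_int a = Inf (line_zeros a)"

definition pval_int :: "int^'d \<Rightarrow> int" where
  "pval_int a = Max (line_zeros a \<inter> {val_int a..<val_int a + q})"

lemma bdd_below_line_zeros:
  assumes "val dd f a > -\<infinity>"
  shows "bdd_below (line_zeros a)"
proof -
  obtain m1 where m1: "m1 \<in> line_zeros a" using line_zeros_nonempty by blast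
  have low: "val dd f a \<le> ereal (of_int m / of_int q)" if "m \<in> line_zeros a" for m
    unfolding val_eq_Inf using that by (auto intro: Inf_lower)
  then obtain v where v: "val dd f a = ereal v"
    using assms m1 by (cases "val dd f a") force+
  have "\<lfloor>v * of_int q\<rfloor> \<le> m" if "m \<in> line_zeros a" for m
  proof -
    have "v \<le> of_int m / of_int q" using low[OF that] v by simp
    then have "v * of_int q \<le> of_int m" using q_pos by (simp add: field_simps)
    then show ?thesis by linarith
  qed
  then show ?thesis by (auto simp: bdd_below_def)
qed

context
  fixes a assumes bdd: "bdd_below (line_zeros a)"
begin

lemma val_int_mem: "val_int a \<in> line_zeros a"
  unfolding val_int_def using int_Inf_mem[OF line_zeros_nonempty bdd] .

lemma val_int_le: "m \<in> line_zeros a \<Longrightarrow> val_int a \<le> m"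
  unfolding val_int_def using bdd by (rule cInf_lower[rotated])

lemma val_eq_val_int: "val dd f a = ereal (of_int (val_int a) / of_int q)"
proof -
  have "of_int (val_int a) / of_int q \<le> (of_int m / of_int q :: real)" if "m \<in> line_zeros a" for m
    using val_int_le[OF that] q_pos by (intro divide_right_mono) auto
  then show ?thesis unfolding val_eq_Inf
    by (intro antisym Inf_lower Inf_greatest) (auto intro: val_int_mem)
qed

lemma pval_int_less: "pval_int a < val_int a + q"
proof -
  define P where "P = line_zeros a \<inter> {val_int a..<val_int a + q}"
  have "finite P" "val_int a \<in> P" using val_int_mem q_pos by (auto simp: P_def)
  then have "Max P \<in> P" by (intro Max_in) auto
  then show ?thesis unfolding pval_int_def P_def[symmetric] by (simp add: P_def)
qed

lemma pval_eq_pval_int: "pval dd f a = of_int (pval_int a) / of_int q"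
proof -
  have qp: "0 < real_of_int q" using q_pos by simp
  have shift: "of_int (val_int a) / of_int q + 1 = (of_int (val_int a + q) :: real) / of_int q"
    using qp by (simp add: field_simps)
  have window: "(of_int (val_int a) / of_int q \<le> (of_int m / of_int q :: real)
      \<and> (of_int m / of_int q :: real) < of_int (val_int a) / of_int q + 1)
      \<longleftrightarrow> m \<in> {val_int a..<val_int a + q}" for m
    unfolding shift using qp by (simp add: divide_le_cancel divide_less_cancel) linarith
  have "{t. real_of_ereal (val dd f a) \<le> t \<and> t < real_of_ereal (val dd f a) + 1 \<and> online dd f a t}
     = (\<lambda>m. of_int m / of_int q) ` (line_zeros a \<inter> {val_int a..<val_int a + q})"
    (is "?T = _")
  proof (intro set_eqI iffI)
    fix t :: real assume "t \<in> ?T"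
    then obtain m where "m \<in> line_zeros a" "t = of_int m / of_int q"
      "of_int (val_int a) / of_int q \<le> t" "t < of_int (val_int a) / of_int q + 1"
      unfolding val_eq_val_int online_iff_line_zeros by auto
    with window[of m] show "t \<in> (\<lambda>m. of_int m / of_int q) ` (line_zeros a \<inter> {val_int a..<val_int a + q})"
      by blast
  next
    fix t :: real assume "t \<in> (\<lambda>m. of_int m / of_int q) ` (line_zeros a \<inter> {val_int a..<val_int a + q})"
    then obtain m where "m \<in> line_zeros a" "t = of_int m / of_int q" "m \<in> {val_int a..<val_int a + q}"
      by blast
    with window[of m] show "t \<in> ?T" unfolding val_eq_val_int online_iff_line_zeros by auto
  qed
  moreover have "mono (\<lambda>m::int. of_int m / (of_int q :: real))"
    using qp by (auto intro!: monoI divide_right_mono)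
  moreover have "finite (line_zeros a \<inter> {val_int a..<val_int a + q})"
    "line_zeros a \<inter> {val_int a..<val_int a + q} \<noteq> {}"
    using val_int_mem q_pos by auto
  ultimately show ?thesis unfolding pval_def pval_int_def by (metis mono_Max_commute)
qed

lemma vertex_in_Vmon': "a + pval_int a *s e \<in> Vmon' dd f"
proof -
  have "vpt dd f a = rv a + (of_int (pval_int a) / of_int q) *\<^sub>R rv dd"
    by (simp add: vpt_def pval_eq_pval_int)
  also have "\<dots> = rv (a + pval_int a *s e)"
    using q_pos by (simp add: dd_eq_smult vec_eq_iff rv_def)
  finally have "vpt dd f a = rv (a + pval_int a *s e)" .
  then show ?thesis unfolding Vmon'_def
    by (intro CollectI exI[of _ a]) (simp add: val_eq_val_int)
qed

text \<open>The \<open>q\<close> zeros just below \<open>h\<^sub>i(a)/h\<^sub>i(-e)\<close> bound \<open>val_int a\<close>, hence \<open>pval_int a\<close>, from above.\<close>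

lemma lf_vertex_nonneg:
  assumes "i < n" "0 < slope i"
  shows "0 \<le> lf (h i) (a + pval_int a *s e)"
proof -
  define k where "k = lf (h i) a div slope i"
  have "k - q + 1 \<in> line_zeros a"
    using assms q_pos by (intro consecutive_line_zeros) (auto simp: k_def)
  then have "pval_int a \<le> k" using val_int_le pval_int_less by fastforce
  then have "pval_int a * slope i \<le> k * slope i" using assms by (simp add: mult_right_mono)
  moreover have "k * slope i \<le> lf (h i) a"
    using assms unfolding k_def by (metis div_mult_mod_eq le_add_same_cancel1 pos_mod_sign)
  ultimately show ?thesis by (simp add: lf_on_line)
qed

lemma vertex_in_Wbeta:
  assumes "a \<in> Wbeta n h \<beta>" "\<forall>i<n. \<beta> i = 0 \<or> lf (h i) dd = 0"
  shows "a + pval_int a *s e \<in> Wbeta n h \<beta>"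
  unfolding Wbeta_def semigp_def
proof (intro CollectI conjI allI impI)
  fix i assume i: "i < n"
  show "int (\<beta> i) \<le> lf (h i) (a + pval_int a *s e)"
  proof (cases "slope i = 0")
    case True then show ?thesis using assms(1) i by (simp add: Wbeta_def lf_on_line)
  next
    case False
    then have "lf (h i) dd \<noteq> 0" using q_pos lf_neg_dd[of i] by (auto simp: lf_minus)
    then show ?thesis using assms(2) i False slope_nonneg lf_vertex_nonneg by force
  qed
  then show "0 \<le> lf (h i) (a + pval_int a *s e)" by linarith
qed

end

end

locale fixed_ideal_setting = homogeneous_operator n h dd e q f
  for n :: nat and h :: "nat \<Rightarrow> int^'d::finite" and dd e :: "int^'d" and q :: int
    and f :: "('d \<Rightarrow> nat) \<Rightarrow>\<^sub>0 complex" +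
  fixes B :: "(nat \<Rightarrow> nat) set"
  assumes B_compat: "compatible n h dd B"
    and val_bounded_below: "\<forall>a\<in>WB n h B. val dd f a > -\<infinity>"
    and vertex_zeros: "\<forall>a\<in>Vmon' dd f \<inter> WB n h B. \<forall>i::int. 0 \<le> i \<and> i \<le> q - 1 \<longrightarrow>
               a - (\<chi> j. i * e$j) \<in> Vmon f"
    and vertex_separation: "\<forall>a\<in>Vmon' dd f \<inter> WB n h B. \<forall>b\<in>Vmon' dd f \<inter> WB n h B.
               a - b \<notin> {s - e | s. s \<in> semigp n h}"
begin

abbreviation G where "G \<equiv> Vmon' dd f \<inter> WB n h B"

lemma bdd_below_line_zeros_WB:
  assumes "a \<in> WB n h B"
  shows "bdd_below (line_zeros a)"
  using val_bounded_below assms by (intro bdd_below_line_zeros) blast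

lemma vertex_in_G:
  assumes "b \<in> WB n h B"
  shows "b + pval_int b *s e \<in> G"
proof -
  note bdd = bdd_below_line_zeros_WB[OF assms]
  obtain \<beta> where \<beta>: "\<beta> \<in> B" "b \<in> Wbeta n h \<beta>" using assms by (auto simp: WB_def)
  then have "b + pval_int b *s e \<in> Wbeta n h \<beta>"
    using B_compat by (intro vertex_in_Wbeta[OF bdd]) (auto simp: compatible_def)
  then show ?thesis using \<beta>(1) vertex_in_Vmon'[OF bdd] by (auto simp: WB_def)
qed

lemma mon_upset_eq: "mon_upset n h G = {b \<in> WB n h B. 0 \<le> pval_int b}"
proof (intro set_eqI iffI)
  fix b assume "b \<in> mon_upset n h G"
  then obtain g s where gs: "b = g + s" "g \<in> G" "s \<in> semigp n h" by (auto simp: mon_upset_def)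
  then have bW: "b \<in> WB n h B" using WB_add_semigp by blast
  have "0 \<le> pval_int b"
  proof (rule ccontr)
    assume neg: "\<not> 0 \<le> pval_int b"
    text \<open>Then the vertex of \<open>b\<close> and \<open>g\<close> would violate condition (3).\<close>
    have "(b + pval_int b *s e) - g = (s + (- pval_int b - 1) *s (-e)) - e"
      by (simp add: gs(1) vec_eq_iff algebra_simps)
    moreover have "s + (- pval_int b - 1) *s (-e) \<in> semigp n h"
      using neg gs(3) by (intro semigp_add smult_neg_e_in_semigp) auto
    ultimately show False using vertex_separation gs(2) vertex_in_G[OF bW] by blast
  qed
  with bW show "b \<in> {b \<in> WB n h B. 0 \<le> pval_int b}" by simp
next
  fix b assume "b \<in> {b \<in> WB n h B. 0 \<le> pval_int b}"
  then have bW: "b \<in> WB n h B" and nonneg: "0 \<le> pval_int b" by auto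
  have "b = (b + pval_int b *s e) + pval_int b *s (-e)" by (simp add: vec_eq_iff)
  with vertex_in_G[OF bW] smult_neg_e_in_semigp[OF nonneg]
  show "b \<in> mon_upset n h G" unfolding mon_upset_def by blast
qed

lemma Exp_ideal_eq: "Exp n h (mon_ideal n h G) = {b \<in> WB n h B. 0 \<le> pval dd f b}"
proof -
  have "G \<subseteq> semigp n h" using WB_subset_semigp by blast
  then have "Exp n h (mon_ideal n h G) = {b \<in> WB n h B. 0 \<le> pval_int b}"
    unfolding mon_upset_eq[symmetric] by (rule Exp_mon_ideal)
  moreover have "0 \<le> pval dd f b \<longleftrightarrow> 0 \<le> pval_int b" if "b \<in> WB n h B" for b
    using pval_eq_pval_int[OF bdd_below_line_zeros_WB[OF that]] q_pos
    by (simp add: zero_le_divide_iff)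
  ultimately show ?thesis by auto
qed

lemma mon_upset_add_dd:
  assumes a: "a \<in> mon_upset n h G" and nz: "evalp f (cv a) \<noteq> 0"
  shows "a + dd \<in> mon_upset n h G"
proof -
  have aW: "a \<in> WB n h B" and nonneg: "0 \<le> pval_int a" using a mon_upset_eq by auto
  have "q \<le> pval_int a"
  proof (rule ccontr)
    assume "\<not> q \<le> pval_int a"
    then have "(a + pval_int a *s e) - (\<chi> j. pval_int a * e$j) \<in> Vmon f"
      using vertex_zeros vertex_in_G[OF aW] nonneg by auto
    moreover have "(a + pval_int a *s e) - (\<chi> j. pval_int a * e$j) = a" by (simp add: vec_eq_iff)
    ultimately show False using nz by (simp add: Vmon_def)
  qed
  then have "(pval_int a - q) *s (-e) \<in> semigp n h" by (intro smult_neg_e_in_semigp) simp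
  moreover have "a + dd = (a + pval_int a *s e) + (pval_int a - q) *s (-e)"
    by (simp add: dd_eq_smult vec_eq_iff algebra_simps)
  ultimately show ?thesis using vertex_in_G[OF aW] unfolding mon_upset_def by blast
qed

lemma mon_upset_nonvanishing:
  assumes b: "b \<in> mon_upset n h G"
  shows "evalp f (cv (b - dd)) \<noteq> 0"
proof
  assume zero: "evalp f (cv (b - dd)) = 0"
  have bW: "b \<in> WB n h B" and nonneg: "0 \<le> pval_int b" using b mon_upset_eq by auto
  note bdd = bdd_below_line_zeros_WB[OF bW]
  have "b + (-q) *s e = b - dd" by (simp add: dd_eq_smult vec_eq_iff)
  then have "-q \<in> line_zeros b" using zero by (simp add: line_zeros_def Vmon_def)
  then have "val_int b \<le> -q" by (rule val_int_le[OF bdd])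
  then show False using pval_int_less[OF bdd] nonneg by linarith
qed

lemma delta_ideal_eq: "delta dd f ` mon_ideal n h G = mon_ideal n h G"
  unfolding mon_ideal_eq
proof (rule delta_image_keys_eq)
  show "x \<in> mon_upset n h G" if "x + dd \<in> mon_upset n h G" for x
    using mon_upset_add_semigp[OF that md_S] by simp
qed (use mon_upset_add_dd mon_upset_nonvanishing in blast)+

end

theorem mainTheorem7:
  fixes n :: nat and h :: "nat \<Rightarrow> int^'d::finite"
    and dd e :: "int^'d" and q :: int
    and f :: "('d \<Rightarrow> nat) \<Rightarrow>\<^sub>0 complex"
    and B :: "(nat \<Rightarrow> nat) set"
  assumes cone: "cone_data n h"
    and d_nz: "dd \<noteq> 0"
    and md_S: "-dd \<in> semigp n h"
    and q_pos: "q \<ge> 1" and e_prim: "primitive_vec e" and d_eq: "dd = (\<chi> j. q * e$j)"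
    and f_div: "divisible_by_Hd n h dd f"
    and B_compat: "compatible n h dd B"
    and h1: "\<forall>a\<in>WB n h B. val dd f a > -\<infinity>"
    and h2: "\<forall>a\<in>Vmon' dd f \<inter> WB n h B. \<forall>i::int. 0 \<le> i \<and> i \<le> q - 1 \<longrightarrow>
               a - (\<chi> j. i * e$j) \<in> Vmon f"
    and h3: "\<forall>a\<in>Vmon' dd f \<inter> WB n h B. \<forall>b\<in>Vmon' dd f \<inter> WB n h B.
               a - b \<notin> {s - e | s. s \<in> semigp n h}"
  shows "delta dd f ` mon_ideal n h (Vmon' dd f \<inter> WB n h B) = mon_ideal n h (Vmon' dd f \<inter> WB n h B)
       \<and> Exp n h (mon_ideal n h (Vmon' dd f \<inter> WB n h B)) = {b \<in> WB n h B. pval dd f b \<ge> 0}"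
proof -
  interpret fixed_ideal_setting n h dd e q f B using assms by unfold_locales
  show ?thesis using delta_ideal_eq Exp_ideal_eq by simp
qed

end
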